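(* Let $f = \sum_{i=0}^{n} c_i x^{k_i} \in \mathbb{N}_0[x^{\pm 1}]$, with $c_0,\ldots,c_n$ positive integers and $k_0 > \cdots > k_n$ integers, and suppose $|\operatorname{supp}(f)| > 1$. Then $f$ is irreducible in $\mathbb{N}_0[x^{\pm 1}]$ if and only if $f$ is monolithic and $\gcd(c_0,\ldots,c_n) = 1$.
   Context: $\mathbb{N}_0[x^{\pm 1}]$ denotes the semiring of Laurent polynomials in $x$ with nonnegative integer coefficients; $\operatorname{supp}(f)$ is the set of exponents occurring in $f$ with nonzero coefficient. The units of $\mathbb{N}_0[x^{\pm 1}]$ are exactly $x^k$, $k\in\mathbb{Z}$. An element $f$ is irreducible if it is nonzero, not a unit, and whenever $f = gh$ one of $g,h$ is a unit. A nonzero $f \in \mathbb{N}_0[x^{\pm 1}]$ is monolithic if whenever $f = gh$ with $g,h \in \mathbb{N}_0[x^{\pm 1}]$, one of $g, h$ is a monomial, i.e. of the form $c x^k$ with $c$ a positive integer and $k \in \mathbb{Z}$. *)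

theory Defs
  imports "HOL-Library.Poly_Mapping" "HOL-Computational_Algebra.Factorial_Ring"
begin

text \<open>The semiring N_0[x^{+-1}] is modelled as finitely supported functions
  int =>0 nat, with the convolution product of Poly_Mapping:
  Poly_Mapping.single k c represents c x^k, and keys f is supp(f).\<close>

type_synonym laurent_nat = "int \<Rightarrow>\<^sub>0 nat"

definition is_monomial :: "laurent_nat \<Rightarrow> bool" where
  "is_monomial g \<longleftrightarrow> (\<exists>c k. c > 0 \<and> g = Poly_Mapping.single k c)"

definition monolithic :: "laurent_nat \<Rightarrow> bool" where
  "monolithic f \<longleftrightarrow> f \<noteq> 0 \<and>
     (\<forall>g h. f = g * h \<longrightarrow> is_monomial g \<or> is_monomial h)"

end

theory Submission
  imports Defs
begin

text \<open>Since all coefficients are nonnegative, no cancellation occurs in a product: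
  every coefficient of \<open>g * h\<close> dominates each product of a coefficient of \<open>g\<close> with one
  of \<open>h\<close>. Hence units are exactly the monomials \<open>x\<^sup>k\<close>, and a factorisation \<open>f = g * h\<close>
  is trivial exactly when one factor is a unit. A monomial factor \<open>c x\<^sup>k\<close> with \<open>c > 1\<close>
  divides all coefficients of \<open>f\<close>, so it is excluded precisely by the gcd condition;
  conversely, pulling out the gcd \<open>d\<close> of the coefficients writes \<open>f = d \<cdot> f'\<close> with
  \<open>f'\<close> not a monomial, since \<open>f\<close> has more than one term.\<close>

definition content :: "('k \<Rightarrow>\<^sub>0 nat) \<Rightarrow> nat" where
  "content f = Gcd (Poly_Mapping.lookup f ` Poly_Mapping.keys f)"

lemma dvd_content_iff:
  "d dvd content f \<longleftrightarrow> (\<forall>x. d dvd Poly_Mapping.lookup f x)"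
  unfolding content_def by (auto simp: dvd_Gcd_iff in_keys_iff)

lemma lookup_single_zero_mult:
  fixes p :: "'k::comm_monoid_add \<Rightarrow>\<^sub>0 nat"
  shows "Poly_Mapping.lookup (Poly_Mapping.single 0 s * p) x = s * Poly_Mapping.lookup p x"
  by (simp flip: mult_map_scale_conv_mult add: Poly_Mapping.map.rep_eq when_def)

lemma single_content_mult_primitive_part:
  fixes f :: "'k::comm_monoid_add \<Rightarrow>\<^sub>0 nat"
  shows "f = Poly_Mapping.single 0 (content f) * Poly_Mapping.map (\<lambda>v. v div content f) f"
proof (rule poly_mapping_eqI)
  fix x
  have "content f dvd Poly_Mapping.lookup f x"
    using dvd_content_iff[of "content f" f] by simp
  then show "Poly_Mapping.lookup f x = Poly_Mapping.lookup
      (Poly_Mapping.single 0 (content f) * Poly_Mapping.map (\<lambda>v. v div content f) f) x"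
    by (simp add: lookup_single_zero_mult Poly_Mapping.map.rep_eq when_def)
qed

lemma dvd_content_single_mult:
  fixes h :: "'k::comm_monoid_add \<Rightarrow>\<^sub>0 nat"
  shows "c dvd content (Poly_Mapping.single a c * h)"
proof -
  have "Poly_Mapping.single a c * h = Poly_Mapping.single 0 c * (Poly_Mapping.single a 1 * h)"
    by (simp add: mult_single flip: mult.assoc)
  then show ?thesis
    by (simp add: dvd_content_iff lookup_single_zero_mult)
qed

lemma lookup_mult_ge:
  fixes g h :: "'k::comm_monoid_add \<Rightarrow>\<^sub>0 nat"
  shows "Poly_Mapping.lookup g a * Poly_Mapping.lookup h b \<le> Poly_Mapping.lookup (g * h) (a + b)"
proof -
  define sa where "sa = Poly_Mapping.single a (Poly_Mapping.lookup g a)"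
  define sb where "sb = Poly_Mapping.single b (Poly_Mapping.lookup h b)"
  have g: "g = sa + (g - sa)" and h: "h = sb + (h - sb)"
    unfolding sa_def sb_def
    by (auto intro!: poly_mapping_eqI simp: lookup_add lookup_minus lookup_single when_def)
  have "g * h = sa * sb + (sa * (h - sb) + (g - sa) * h)"
    by (subst (1 2) g, subst (1 2) h) (simp add: algebra_simps)
  then have "Poly_Mapping.lookup (sa * sb) (a + b) \<le> Poly_Mapping.lookup (g * h) (a + b)"
    by (simp add: lookup_add)
  then show ?thesis
    unfolding sa_def sb_def by (simp add: mult_single)
qed

lemma mult_eq_one_imp_single:
  fixes g h :: "'k::ab_group_add \<Rightarrow>\<^sub>0 nat"
  assumes "g * h = 1"
  obtains a where "g = Poly_Mapping.single a 1"
proof -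
  have "h \<noteq> 0" using assms by auto
  then obtain b where b: "Poly_Mapping.lookup h b > 0"
    by (metis Poly_Mapping.keys_eq_empty ex_in_conv in_keys_iff gr0I)
  have bound: "Poly_Mapping.lookup g x * Poly_Mapping.lookup h b \<le> (1 when x = - b)" for x
    using lookup_mult_ge[of g x h b] assms by (simp add: lookup_one eq_neg_iff_add_eq_0)
  have zero: "Poly_Mapping.lookup g x = 0" if "x \<noteq> - b" for x
    using bound[of x] b that by (simp add: when_def)
  have "Poly_Mapping.lookup g (- b) * 1 \<le> Poly_Mapping.lookup g (- b) * Poly_Mapping.lookup h b"
    using b by (intro mult_le_mono2) simp
  also have "\<dots> \<le> 1"
    using bound[of "- b"] by simp
  finally have le_one: "Poly_Mapping.lookup g (- b) \<le> 1" by simp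
  have "g \<noteq> 0" using assms by auto
  then obtain y where y: "Poly_Mapping.lookup g y > 0"
    by (metis Poly_Mapping.keys_eq_empty ex_in_conv in_keys_iff gr0I)
  then have "y = - b" using zero[of y] by (metis less_irrefl)
  with y le_one have "Poly_Mapping.lookup g (- b) = 1" by simp
  with zero have "g = Poly_Mapping.single (- b) 1"
    by (intro poly_mapping_eqI) (auto simp: lookup_single when_def)
  then show ?thesis by (rule that)
qed

lemma dvd_one_iff_single:
  fixes g :: "'k::ab_group_add \<Rightarrow>\<^sub>0 nat"
  shows "g dvd 1 \<longleftrightarrow> (\<exists>a. g = Poly_Mapping.single a 1)"
proof
  assume "g dvd 1"
  then obtain h where "g * h = 1" by (metis dvd_def)
  then show "\<exists>a. g = Poly_Mapping.single a 1" by (metis mult_eq_one_imp_single)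
next
  assume "\<exists>a. g = Poly_Mapping.single a 1"
  then obtain a where "g = Poly_Mapping.single a 1" by blast
  then have "g * Poly_Mapping.single (- a) 1 = 1" by (simp add: mult_single del: One_nat_def)
  then show "g dvd 1" by (metis dvd_triv_left)
qed

lemma monomial_factor_dvd_one:
  fixes g h :: laurent_nat
  assumes "is_monomial g" and "content (g * h) = 1"
  shows "g dvd 1"
proof -
  obtain c a where "g = Poly_Mapping.single a c" using assms(1) by (auto simp: is_monomial_def)
  moreover from this have "c = 1" using dvd_content_single_mult[of c a h] assms(2) by simp
  ultimately show ?thesis by (auto simp: dvd_one_iff_single)
qed

theorem irreducible_iff_monolithic_content:
  fixes f :: laurent_nat
  assumes "card (Poly_Mapping.keys f) > 1"
  shows "irreducible f \<longleftrightarrow> monolithic f \<and> content f = 1"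
proof
  have not_single: "f \<noteq> Poly_Mapping.single a c" for a c
    using assms by (cases "c = 0") auto
  assume irr: "irreducible f"
  have "is_monomial g \<or> is_monomial h" if "f = g * h" for g h
    using irreducibleD[OF irr that] by (auto simp: dvd_one_iff_single is_monomial_def)
  then have "monolithic f"
    using irr by (auto simp: monolithic_def)
  moreover have "content f = 1"
    using irreducibleD[OF irr single_content_mult_primitive_part]
  proof
    assume "Poly_Mapping.single 0 (content f) dvd (1 :: laurent_nat)"
    then obtain a where "Poly_Mapping.single 0 (content f) = (Poly_Mapping.single a 1 :: laurent_nat)"
      by (auto simp: dvd_one_iff_single)
    then show "content f = 1"
      by (metis lookup_single_eq lookup_single_not_eq zero_neq_one)
  next
    assume "Poly_Mapping.map (\<lambda>v. v div content f) f dvd 1"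
    then obtain a where "Poly_Mapping.map (\<lambda>v. v div content f) f = Poly_Mapping.single a 1"
      by (auto simp: dvd_one_iff_single)
    then have "f = Poly_Mapping.single a (content f)"
      using single_content_mult_primitive_part[of f] by (simp add: mult_single)
    with not_single show "content f = 1" by blast
  qed
  ultimately show "monolithic f \<and> content f = 1" ..
next
  assume mono: "monolithic f \<and> content f = 1"
  show "irreducible f"
  proof (rule irreducibleI)
    show "f \<noteq> 0" using mono by (simp add: monolithic_def)
    show "\<not> f dvd 1"
      using assms by (auto simp: dvd_one_iff_single)
    fix g h assume "f = g * h"
    then show "g dvd 1 \<or> h dvd 1"
      using mono monomial_factor_dvd_one[of g h] monomial_factor_dvd_one[of h g]
      by (auto simp: monolithic_def mult.commute)
  qed
qed

lemma content_sum_single: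
  fixes k :: "'i \<Rightarrow> 'k::comm_monoid_add"
  assumes "finite A" and "inj_on k A" and "\<forall>i\<in>A. c i > 0"
  shows "content (\<Sum>i\<in>A. Poly_Mapping.single (k i) (c i)) = Gcd (c ` A)"
proof -
  define f where "f = (\<Sum>i\<in>A. Poly_Mapping.single (k i) (c i))"
  have lookup_at: "Poly_Mapping.lookup f (k i) = c i" if "i \<in> A" for i
  proof -
    have "Poly_Mapping.lookup f (k i) = (\<Sum>j\<in>A. if j = i then c i else 0)"
      unfolding f_def lookup_sum
      by (intro sum.cong) (use assms(2) that in \<open>auto simp: lookup_single when_def inj_on_eq_iff\<close>)
    with that assms(1) show ?thesis by simp
  qed
  have "Poly_Mapping.lookup f x = 0" if "x \<notin> k ` A" for x
    using that unfolding f_def lookup_sum by (auto simp: lookup_single when_def intro!: sum.neutral)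
  with lookup_at assms(3) have "Poly_Mapping.keys f = k ` A"
    by (force simp: in_keys_iff)
  then have "Poly_Mapping.lookup f ` Poly_Mapping.keys f = c ` A"
    using lookup_at by (simp add: image_image)
  then show ?thesis
    unfolding f_def[symmetric] content_def by simp
qed

theorem lemma2p4:
  fixes n :: nat and c :: "nat \<Rightarrow> nat" and k :: "nat \<Rightarrow> int" and f :: laurent_nat
  assumes "\<forall>i\<le>n. c i > 0"
    and "\<forall>i j. i < j \<and> j \<le> n \<longrightarrow> k j < k i"
    and "f = (\<Sum>i\<le>n. Poly_Mapping.single (k i) (c i))"
    and "card (Poly_Mapping.keys f) > 1"
  shows "irreducible f \<longleftrightarrow> monolithic f \<and> Gcd (c ` {..n}) = 1"
proof -
  have "inj_on k {..n}"
    using assms(2) by (intro inj_onI) (metis atMost_iff linorder_neqE_nat order_less_irrefl)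
  then have "content f = Gcd (c ` {..n})"
    using assms(1,3) content_sum_single[of "{..n}" k c] by simp
  then show ?thesis
    using irreducible_iff_monolithic_content[OF assms(4)] by simp
qed

end
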